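(* Let $P$ be a Poisson bracket on $\mathbb{R}^n$ and let $\odot_\nu$ be the sun-product associated with a star-product on $(\mathbb{R}^n,P)$, extended to $\mathsf{N}_\nu$ via its differential cochains. Then $\odot_\nu$ is weakly trivial: there exists an $\mathbb{R}[[\nu]]$-linear map $S_\nu=\sum_{r\ge0}\nu^rS_r:\mathsf{N}_\nu\to\mathsf{N}_\nu$ with $S_0=I$ and each $S_r$ ($r\ge1$) a differential operator on $\mathsf{N}$, such that $S_\nu(f\odot_\nu g)=fg$ for all $f,g\in\mathsf{N}$.
   Context: $\mathsf{N}=C^\infty(\mathbb{R}^n)$, coordinates $x_1,\dots,x_n$, $\mathsf{Pol}=\mathbb{R}[x_1,\dots,x_n]$, $\mathsf{N}_\nu=\mathsf{N}[[\nu]]$, $\pi:\mathsf{N}_\nu\to\mathsf{N}$ the projection onto the $\nu^0$-coefficient. A (differential) star-product on $(\mathbb{R}^n,P)$ is a bilinear map $f\ast_\nu g=\sum_{r\ge0}\nu^rC_r(f,g)$ from $\mathsf{N}\times\mathsf{N}$ to $\mathsf{N}[[\nu]]$, extended $\mathbb{R}[[\nu]]$-bilinearly, with bidifferential $C_r$ satisfying: $C_0(f,g)=fg$; $C_r(c,f)=C_r(f,c)=0$ for $r\ge1$, $c$ constant; associativity $\sum_{s+t=r}C_s(C_t(f,g),h)=\sum_{s+t=r}C_s(f,C_t(g,h))$; $C_1(f,g)-C_1(g,f)=2P(f,g)$. Its sun-product cochains $\rho_r:\mathsf{Pol}\to\mathsf{N}$ are determined by $\rho(1)=1$ and $\rho(x_{i_1}\cdots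 x_{i_k})=\frac1{k!}\sum_{\sigma\in S_k}x_{i_{\sigma(1)}}\ast_\nu\cdots\ast_\nu x_{i_{\sigma(k)}}=\sum_r\nu^r\rho_r(x_{i_1}\cdots x_{i_k})$, with $\rho_0$ the identity; the sun-product on polynomial data is $f\odot_\nu g=\rho(\pi(fg))$. Each $\rho_r$ is the restriction to $\mathsf{Pol}$ of a unique differential operator on $\mathsf{N}$ (still denoted $\rho_r$), and the sun-product is extended to $\mathsf{N}_\nu$ by $f\odot_\nu g=\pi(fg)+\sum_{r\ge1}\nu^r\rho_r(\pi(fg))$. *)

theory Defs
  imports "HOL-Analysis.Analysis" "HOL-Combinatorics.Permutations"
begin

text \<open>Functions on R^n are modelled as real^'n => real; N is the subset of smooth ones.
  Formal power series in nu with coefficients in N are sequences nat => (real^'n => real).\<close>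

type_synonym 'n fn = "real^'n \<Rightarrow> real"
type_synonym 'n ser = "nat \<Rightarrow> 'n fn"

definition pd :: "'n::finite \<Rightarrow> 'n fn \<Rightarrow> 'n fn" where
  "pd i f = (\<lambda>x. deriv (\<lambda>t. f (x + t *\<^sub>R axis i 1)) 0)"

fun iter_pd :: "'n::finite list \<Rightarrow> 'n fn \<Rightarrow> 'n fn" where
  "iter_pd [] f = f"
| "iter_pd (i # is) f = pd i (iter_pd is f)"

definition smooth :: "'n::finite fn \<Rightarrow> bool" where
  "smooth f \<longleftrightarrow> (\<forall>is x. iter_pd is f differentiable (at x))"

definition diff_op :: "('n::finite fn \<Rightarrow> 'n fn) \<Rightarrow> bool" where
  "diff_op D \<longleftrightarrow> (\<exists>k a. (\<forall>is. smooth (a is)) \<and>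
     (\<forall>f. smooth f \<longrightarrow> D f = (\<lambda>x. \<Sum>is\<in>{is::'n list. length is \<le> k}. a is x * iter_pd is f x)))"

definition bidiff_op :: "('n::finite fn \<Rightarrow> 'n fn \<Rightarrow> 'n fn) \<Rightarrow> bool" where
  "bidiff_op B \<longleftrightarrow> (\<exists>k a. (\<forall>is js. smooth (a is js)) \<and>
     (\<forall>f g. smooth f \<longrightarrow> smooth g \<longrightarrow> B f g = (\<lambda>x.
        \<Sum>is\<in>{is::'n list. length is \<le> k}. \<Sum>js\<in>{js::'n list. length js \<le> k}.
          a is js x * iter_pd is f x * iter_pd js g x)))"

definition poisson_bracket :: "('n::finite fn \<Rightarrow> 'n fn \<Rightarrow> 'n fn) \<Rightarrow> bool" where
  "poisson_bracket P \<longleftrightarrow>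
     (\<exists>\<pi>. (\<forall>i j. smooth (\<pi> i j)) \<and> (\<forall>i j x. \<pi> i j x = - \<pi> j i x) \<and>
        (\<forall>f g. smooth f \<longrightarrow> smooth g \<longrightarrow>
           P f g = (\<lambda>x. \<Sum>i\<in>UNIV. \<Sum>j\<in>UNIV. \<pi> i j x * pd i f x * pd j g x))) \<and>
     (\<forall>f g h. smooth f \<longrightarrow> smooth g \<longrightarrow> smooth h \<longrightarrow>
        (\<forall>x. P f (P g h) x + P g (P h f) x + P h (P f g) x = 0))"

text \<open>Differential star-product f *_nu g = sum nu^r C_r(f,g) on (R^n, P).\<close>
definition star_product :: "('n::finite fn \<Rightarrow> 'n fn \<Rightarrow> 'n fn) \<Rightarrow> (nat \<Rightarrow> 'n fn \<Rightarrow> 'n fn \<Rightarrow> 'n fn) \<Rightarrow> bool" where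
  "star_product P C \<longleftrightarrow>
     (\<forall>r. bidiff_op (C r)) \<and>
     (\<forall>f g. smooth f \<longrightarrow> smooth g \<longrightarrow> C 0 f g = (\<lambda>x. f x * g x)) \<and>
     (\<forall>r f c. r \<ge> 1 \<longrightarrow> smooth f \<longrightarrow> C r (\<lambda>_. c) f = (\<lambda>_. 0) \<and> C r f (\<lambda>_. c) = (\<lambda>_. 0)) \<and>
     (\<forall>r f g h. smooth f \<longrightarrow> smooth g \<longrightarrow> smooth h \<longrightarrow>
        (\<lambda>x. \<Sum>s\<le>r. C s (C (r - s) f g) h x) = (\<lambda>x. \<Sum>s\<le>r. C s f (C (r - s) g h) x)) \<and>
     (\<forall>f g. smooth f \<longrightarrow> smooth g \<longrightarrow> (\<forall>x. C 1 f g x - C 1 g f x = 2 * P f g x))"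

definition star_ser :: "(nat \<Rightarrow> 'n fn \<Rightarrow> 'n fn \<Rightarrow> 'n fn) \<Rightarrow> 'n ser \<Rightarrow> 'n ser \<Rightarrow> 'n ser" where
  "star_ser C F G = (\<lambda>r x. \<Sum>s\<le>r. \<Sum>t\<le>r - s. C s (F t) (G (r - s - t)) x)"

definition coord_ser :: "'n::finite \<Rightarrow> 'n ser" where
  "coord_ser i = (\<lambda>r x. if r = 0 then x $ i else 0)"

definition unit_ser :: "'n ser" where
  "unit_ser = (\<lambda>r x. if r = 0 then 1 else 0)"

text \<open>x_{i1} * ... * x_{ik} (star products, bracketed to the right; associativity makes this irrelevant).\<close>
fun star_list :: "(nat \<Rightarrow> 'n::finite fn \<Rightarrow> 'n fn \<Rightarrow> 'n fn) \<Rightarrow> 'n list \<Rightarrow> 'n ser" where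
  "star_list C [] = unit_ser"
| "star_list C (i # is) = star_ser C (coord_ser i) (star_list C is)"

definition monomial :: "'n::finite list \<Rightarrow> 'n fn" where
  "monomial is = (\<lambda>x. prod_list (map (\<lambda>i. x $ i) is))"

definition sym_star :: "(nat \<Rightarrow> 'n::finite fn \<Rightarrow> 'n fn \<Rightarrow> 'n fn) \<Rightarrow> 'n list \<Rightarrow> 'n ser" where
  "sym_star C is = (\<lambda>r x. (1 / fact (length is)) *
     (\<Sum>\<sigma>\<in>{\<sigma>. \<sigma> permutes {..<length is}}.
        star_list C (map (\<lambda>j. is ! \<sigma> j) [0..<length is]) r x))"

text \<open>rho is the family of sun-product cochains of the star product C: each rho_r is a
  differential operator on N whose restriction to polynomials is the coefficient of nu^r in
  the symmetrized star product of the coordinates.\<close>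
definition sun_cochains :: "(nat \<Rightarrow> 'n::finite fn \<Rightarrow> 'n fn \<Rightarrow> 'n fn) \<Rightarrow> (nat \<Rightarrow> 'n fn \<Rightarrow> 'n fn) \<Rightarrow> bool" where
  "sun_cochains C \<rho> \<longleftrightarrow> (\<forall>r. diff_op (\<rho> r)) \<and> (\<forall>r is. \<rho> r (monomial is) = sym_star C is r)"

definition sun :: "(nat \<Rightarrow> 'n fn \<Rightarrow> 'n fn) \<Rightarrow> 'n fn \<Rightarrow> 'n fn \<Rightarrow> 'n ser" where
  "sun \<rho> f g = (\<lambda>r. if r = 0 then (\<lambda>x. f x * g x) else \<rho> r (\<lambda>x. f x * g x))"

definition apply_ser :: "(nat \<Rightarrow> 'n fn \<Rightarrow> 'n fn) \<Rightarrow> 'n ser \<Rightarrow> 'n ser" where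
  "apply_ser S F = (\<lambda>r x. \<Sum>s\<le>r. S s (F (r - s)) x)"

end

theory Submission
  imports Defs
begin

text \<open>The sun product is \<open>f \<odot>\<^sub>\<nu> g = \<rho>\<^sub>\<nu>(fg)\<close> with \<open>\<rho>\<^sub>\<nu> = I + \<Sum>\<^sub>r\<^sub>\<ge>\<^sub>1 \<nu>\<^sup>r \<rho>\<^sub>r\<close>, a formal
  series of differential operators with leading term the identity. Such a series has a left
  inverse \<open>S\<^sub>\<nu>\<close> in the ring of formal series of operators, given recursively by
  \<open>S\<^sub>0 = I\<close> and \<open>S\<^sub>r = - \<Sum>\<^sub>s\<^sub><\<^sub>r S\<^sub>s \<rho>\<^sub>r\<^sub>-\<^sub>s\<close>, and then \<open>S\<^sub>\<nu>(f \<odot>\<^sub>\<nu> g) = fg\<close>.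
  Since differential operators are closed under sums and composition, every \<open>S\<^sub>r\<close> is again a
  differential operator. Beyond the \<open>\<rho>\<^sub>r\<close> being differential operators, neither the
  Poisson bracket nor the star product plays any role.\<close>

lemma iter_pd_append: "iter_pd (is @ js) f = iter_pd is (iter_pd js f)"
  by (induction "is") auto

lemma smooth_imp_differentiable: "smooth f \<Longrightarrow> f differentiable (at x)"
  unfolding smooth_def by (metis iter_pd.simps(1))

lemma smooth_iter_pd: "smooth f \<Longrightarrow> smooth (iter_pd js f)"
  unfolding smooth_def by (metis iter_pd_append)

lemma smooth_pd: "smooth f \<Longrightarrow> smooth (pd i f)"
  using smooth_iter_pd[of f "[i]"] by simp

lemma has_real_derivative_pd:
  fixes f :: "'n::finite fn"
  assumes "f differentiable (at x)"
  shows "((\<lambda>t. f (x + t *\<^sub>R axis i 1)) has_real_derivative pd i f x) (at 0)"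
proof -
  have "(f \<circ> (\<lambda>t::real. x + t *\<^sub>R axis i 1)) differentiable (at 0)"
    using assms by (intro differentiable_chain_at derivative_intros) simp
  then show ?thesis
    unfolding pd_def DERIV_deriv_iff_real_differentiable[symmetric] by (simp add: o_def)
qed

lemma pd_add:
  fixes f g :: "'n::finite fn"
  assumes "\<And>x. f differentiable (at x)" "\<And>x. g differentiable (at x)"
  shows "pd i (\<lambda>x. f x + g x) = (\<lambda>x. pd i f x + pd i g x)"
proof
  fix x
  have "((\<lambda>t. f (x + t *\<^sub>R axis i 1) + g (x + t *\<^sub>R axis i 1))
          has_real_derivative pd i f x + pd i g x) (at 0)"
    using has_real_derivative_pd[OF assms(1)] has_real_derivative_pd[OF assms(2)]
    by (rule DERIV_add)
  then show "pd i (\<lambda>x. f x + g x) x = pd i f x + pd i g x"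
    unfolding pd_def[of i "\<lambda>x. f x + g x"] by (rule DERIV_imp_deriv)
qed

lemma pd_mult:
  fixes f g :: "'n::finite fn"
  assumes "\<And>x. f differentiable (at x)" "\<And>x. g differentiable (at x)"
  shows "pd i (\<lambda>x. f x * g x) = (\<lambda>x. pd i f x * g x + f x * pd i g x)"
proof
  fix x
  have "((\<lambda>t. f (x + t *\<^sub>R axis i 1) * g (x + t *\<^sub>R axis i 1))
          has_real_derivative pd i f x * g x + pd i g x * f x) (at 0)"
    using DERIV_mult[OF has_real_derivative_pd[OF assms(1)] has_real_derivative_pd[OF assms(2)]]
    by simp
  then show "pd i (\<lambda>x. f x * g x) x = pd i f x * g x + f x * pd i g x"
    unfolding pd_def[of i "\<lambda>x. f x * g x"] by (simp add: DERIV_imp_deriv)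
qed

lemma pd_const: "pd i (\<lambda>_. k) = (\<lambda>_. 0)"
  unfolding pd_def by (simp add: DERIV_imp_deriv)

lemma iter_pd_const: "iter_pd is (\<lambda>_. k) = (if is = [] then (\<lambda>_. k) else (\<lambda>_. 0))"
  by (induction "is") (auto simp: pd_const)

lemma smooth_const: "smooth (\<lambda>_. k)"
  unfolding smooth_def by (simp add: iter_pd_const)

text \<open>A differential operator is presented by a list of terms \<open>(c, is)\<close>, standing for
  \<open>h \<mapsto> \<Sum> c \<cdot> \<partial>\<^sub>i\<^sub>s h\<close>; unlike the normal form in \<^const>\<open>diff_op\<close>, repeated
  multi-indices are allowed, which makes sums and compositions easy to write down.\<close>

type_synonym 'n terms = "('n fn \<times> 'n list) list"

definition eval_terms :: "'n::finite terms \<Rightarrow> 'n fn \<Rightarrow> 'n fn" where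
  "eval_terms L h = (\<lambda>x. \<Sum>(c, is)\<leftarrow>L. c x * iter_pd is h x)"

definition smooth_terms :: "'n::finite terms \<Rightarrow> bool" where
  "smooth_terms L \<longleftrightarrow> (\<forall>(c, is)\<in>set L. smooth c)"

lemma eval_terms_Nil [simp]: "eval_terms [] h = (\<lambda>x. 0)"
  by (simp add: eval_terms_def)

lemma eval_terms_Cons: "eval_terms ((c, is) # L) h = (\<lambda>x. c x * iter_pd is h x + eval_terms L h x)"
  by (simp add: eval_terms_def)

lemma eval_terms_append: "eval_terms (L @ M) h x = eval_terms L h x + eval_terms M h x"
  by (simp add: eval_terms_def)

lemma smooth_terms_Cons [simp]: "smooth_terms ((c, is) # L) \<longleftrightarrow> smooth c \<and> smooth_terms L"
  by (simp add: smooth_terms_def)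

lemma smooth_terms_Nil [simp]: "smooth_terms []"
  by (simp add: smooth_terms_def)

lemma smooth_terms_append [simp]: "smooth_terms (L @ M) \<longleftrightarrow> smooth_terms L \<and> smooth_terms M"
  by (auto simp: smooth_terms_def)

lemma differentiable_eval_terms:
  "smooth_terms L \<Longrightarrow> smooth h \<Longrightarrow> eval_terms L h differentiable (at x)"
proof (induction L)
  case (Cons a L)
  obtain c "is" where a: "a = (c, is)" by fastforce
  have "c differentiable (at x)" "iter_pd is h differentiable (at x)"
    using Cons.prems a by (auto intro: smooth_imp_differentiable smooth_iter_pd)
  then show ?case
    using Cons a by (simp add: eval_terms_Cons)
qed simp

definition pd_terms :: "'n::finite \<Rightarrow> 'n terms \<Rightarrow> 'n terms" where
  "pd_terms j L = concat (map (\<lambda>(c, is). [(pd j c, is), (c, j # is)]) L)"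

lemma smooth_terms_pd_terms: "smooth_terms L \<Longrightarrow> smooth_terms (pd_terms j L)"
  by (auto simp: smooth_terms_def pd_terms_def smooth_pd)

lemma pd_eval_terms:
  assumes "smooth_terms L" "smooth h"
  shows "pd j (eval_terms L h) = eval_terms (pd_terms j L) h"
  using assms(1)
proof (induction L)
  case Nil
  then show ?case by (simp add: pd_terms_def pd_const)
next
  case (Cons a L)
  obtain c "is" where a: "a = (c, is)" by fastforce
  have c: "smooth c" and L: "smooth_terms L" using Cons.prems a by auto
  have "pd j (eval_terms (a # L) h) = pd j (\<lambda>x. c x * iter_pd is h x + eval_terms L h x)"
    by (simp add: a eval_terms_Cons)
  also have "\<dots> = (\<lambda>x. pd j (\<lambda>x. c x * iter_pd is h x) x + pd j (eval_terms L h) x)"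
    using c L assms(2)
    by (intro pd_add differentiable_mult)
      (auto intro: smooth_imp_differentiable smooth_iter_pd differentiable_eval_terms)
  also have "\<dots> = (\<lambda>x. pd j c x * iter_pd is h x + c x * iter_pd (j # is) h x
                        + eval_terms (pd_terms j L) h x)"
    using c L assms(2) Cons.IH
    by (subst pd_mult) (auto intro!: smooth_imp_differentiable smooth_iter_pd)
  also have "\<dots> = eval_terms (pd_terms j (a # L)) h"
    by (simp add: a pd_terms_def eval_terms_def add.assoc)
  finally show ?case .
qed

fun iter_pd_terms :: "'n::finite list \<Rightarrow> 'n terms \<Rightarrow> 'n terms" where
  "iter_pd_terms [] L = L"
| "iter_pd_terms (j # js) L = pd_terms j (iter_pd_terms js L)"

lemma smooth_terms_iter_pd_terms: "smooth_terms L \<Longrightarrow> smooth_terms (iter_pd_terms js L)"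
  by (induction js) (auto simp: smooth_terms_pd_terms)

lemma iter_pd_eval_terms:
  "smooth_terms L \<Longrightarrow> smooth h \<Longrightarrow> iter_pd js (eval_terms L h) = eval_terms (iter_pd_terms js L) h"
  by (induction js) (auto simp: pd_eval_terms smooth_terms_iter_pd_terms)

lemma smooth_eval_terms: "smooth_terms L \<Longrightarrow> smooth h \<Longrightarrow> smooth (eval_terms L h)"
  unfolding smooth_def[of "eval_terms L h"]
  by (auto simp: iter_pd_eval_terms intro!: differentiable_eval_terms smooth_terms_iter_pd_terms)

lemma smooth_mult: "smooth a \<Longrightarrow> smooth c \<Longrightarrow> smooth (\<lambda>x. a x * c x)"
  using smooth_eval_terms[of "[(a, [])]" c] by (simp add: eval_terms_def smooth_terms_def)

lemma smooth_sum_coefficients: "smooth_terms L \<Longrightarrow> smooth (\<lambda>x. \<Sum>(c, is)\<leftarrow>L. c x)"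
  using smooth_eval_terms[of "map (\<lambda>(c, is). (c, [])) L" "\<lambda>_. 1"]
  by (simp add: eval_terms_def smooth_terms_def smooth_const o_def split_def)

definition scale_terms :: "'n::finite fn \<Rightarrow> 'n terms \<Rightarrow> 'n terms" where
  "scale_terms a L = map (\<lambda>(c, is). (\<lambda>x. a x * c x, is)) L"

lemma eval_scale_terms: "eval_terms (scale_terms a L) h x = a x * eval_terms L h x"
  by (induction L) (auto simp: scale_terms_def eval_terms_def algebra_simps)

lemma smooth_terms_scale_terms: "smooth a \<Longrightarrow> smooth_terms L \<Longrightarrow> smooth_terms (scale_terms a L)"
  by (auto simp: smooth_terms_def scale_terms_def smooth_mult)

definition comp_terms :: "'n::finite terms \<Rightarrow> 'n terms \<Rightarrow> 'n terms" where
  "comp_terms L M = concat (map (\<lambda>(a, js). scale_terms a (iter_pd_terms js M)) L)"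

lemma smooth_terms_comp_terms:
  "smooth_terms L \<Longrightarrow> smooth_terms M \<Longrightarrow> smooth_terms (comp_terms L M)"
  by (induction L)
    (auto simp: comp_terms_def smooth_terms_scale_terms smooth_terms_iter_pd_terms)

lemma eval_comp_terms:
  assumes "smooth_terms L" "smooth_terms M" "smooth h"
  shows "eval_terms (comp_terms L M) h = eval_terms L (eval_terms M h)"
  using assms(1)
  by (induction L)
    (auto simp: comp_terms_def eval_terms_append eval_scale_terms iter_pd_eval_terms assms(2,3)
       eval_terms_Cons fun_eq_iff)

lemma finite_multi_indices: "finite {is::'n::finite list. length is \<le> k}"
  using finite_lists_length_le[of "UNIV :: 'n set" k] by simp

lemma sum_collect_terms:
  fixes F :: "'n list \<Rightarrow> real"
  assumes "finite I" "\<forall>(c, js)\<in>set L. js \<in> I"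
  shows "(\<Sum>is\<in>I. (\<Sum>(c, js)\<leftarrow>filter (\<lambda>(c, js). js = is) L. c x) * F is)
       = (\<Sum>(c, js)\<leftarrow>L. c x * F js)"
  using assms(2)
proof (induction L)
  case (Cons p L)
  obtain c js where p: "p = (c, js)" by fastforce
  have "js \<in> I" using Cons.prems p by auto
  then have "(\<Sum>is\<in>I. (\<Sum>(c', js')\<leftarrow>filter (\<lambda>(c', js'). js' = is) (p # L). c' x) * F is)
      = (\<Sum>is\<in>I. if js = is then c x * F is else 0)
        + (\<Sum>is\<in>I. (\<Sum>(c', js')\<leftarrow>filter (\<lambda>(c', js'). js' = is) L. c' x) * F is)"
    unfolding sum.distrib[symmetric] by (intro sum.cong) (auto simp: p distrib_right)
  also have "\<dots> = c x * F js + (\<Sum>(c, js)\<leftarrow>L. c x * F js)"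
    using Cons \<open>js \<in> I\<close> assms(1) by (simp add: sum.delta)
  finally show ?case by (simp add: p)
qed simp

lemma diff_op_iff_terms:
  fixes D :: "'n::finite fn \<Rightarrow> 'n fn"
  shows "diff_op D \<longleftrightarrow> (\<exists>L. smooth_terms L \<and> (\<forall>h. smooth h \<longrightarrow> D h = eval_terms L h))"
proof
  assume "diff_op D"
  then obtain k a where a: "\<forall>is. smooth (a is)"
    "\<forall>f. smooth f \<longrightarrow> D f = (\<lambda>x. \<Sum>is\<in>{is::'n list. length is \<le> k}. a is x * iter_pd is f x)"
    unfolding diff_op_def by blast
  obtain xs where xs: "set xs = {is::'n list. length is \<le> k}" "distinct xs"
    using finite_distinct_list[OF finite_multi_indices] by blast
  show "\<exists>L. smooth_terms L \<and> (\<forall>h. smooth h \<longrightarrow> D h = eval_terms L h)"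
    by (intro exI[of _ "map (\<lambda>is. (a is, is)) xs"])
      (simp add: a xs smooth_terms_def eval_terms_def o_def sum_list_distinct_conv_sum_set)
next
  assume "\<exists>L. smooth_terms L \<and> (\<forall>h. smooth h \<longrightarrow> D h = eval_terms L h)"
  then obtain L where L: "smooth_terms L" "\<And>h. smooth h \<Longrightarrow> D h = eval_terms L h"
    by blast
  define k where "k = Max (insert 0 (length ` snd ` set L))"
  define a where "a is = (\<lambda>x. \<Sum>(c, js)\<leftarrow>filter (\<lambda>(c, js). js = is) L. c x)" for "is"
  have "\<forall>(c, js)\<in>set L. js \<in> {is::'n list. length is \<le> k}"
    unfolding k_def by (auto intro!: Max_ge simp: image_iff) (metis snd_conv)
  note collect = sum_collect_terms[OF finite_multi_indices this]
  have "smooth (a is)" for "is"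
    unfolding a_def using L(1) by (intro smooth_sum_coefficients) (auto simp: smooth_terms_def)
  moreover have "D f = (\<lambda>x. \<Sum>is\<in>{is::'n list. length is \<le> k}. a is x * iter_pd is f x)"
    if "smooth f" for f
    using L(2)[OF that] collect by (simp add: a_def eval_terms_def fun_eq_iff)
  ultimately show "diff_op D"
    unfolding diff_op_def by blast
qed

lemma diff_op_id: "diff_op (\<lambda>h. h)"
  unfolding diff_op_iff_terms
  by (intro exI[of _ "[(\<lambda>_. 1, [])]"]) (simp add: eval_terms_def smooth_const)

lemma diff_op_comp:
  assumes "diff_op D" "diff_op E"
  shows "diff_op (\<lambda>h. D (E h))"
proof -
  obtain L where L: "smooth_terms L" "\<And>h. smooth h \<Longrightarrow> D h = eval_terms L h"
    using assms(1) by (auto simp: diff_op_iff_terms)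
  obtain M where M: "smooth_terms M" "\<And>h. smooth h \<Longrightarrow> E h = eval_terms M h"
    using assms(2) by (auto simp: diff_op_iff_terms)
  show ?thesis
    unfolding diff_op_iff_terms
    by (intro exI[of _ "comp_terms L M"])
      (simp add: L M smooth_terms_comp_terms eval_comp_terms smooth_eval_terms)
qed

lemma diff_op_uminus: "diff_op D \<Longrightarrow> diff_op (\<lambda>h x. - D h x)"
  unfolding diff_op_iff_terms
  by (elim exE, rule exI[of _ "scale_terms (\<lambda>_. -1) _"])
    (auto simp: smooth_terms_scale_terms smooth_const eval_scale_terms)

lemma diff_op_sum:
  "finite A \<Longrightarrow> (\<And>s. s \<in> A \<Longrightarrow> diff_op (D s)) \<Longrightarrow> diff_op (\<lambda>h x. \<Sum>s\<in>A. D s h x)"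
proof (induction A rule: finite_induct)
  case empty
  show ?case
    unfolding diff_op_iff_terms by (intro exI[of _ "[]"]) (simp add: smooth_terms_def)
next
  case (insert a A)
  obtain L where "smooth_terms L" "\<And>h. smooth h \<Longrightarrow> D a h = eval_terms L h"
    using insert.prems by (auto simp: diff_op_iff_terms)
  moreover obtain M where "smooth_terms M"
    "\<And>h. smooth h \<Longrightarrow> (\<lambda>x. \<Sum>s\<in>A. D s h x) = eval_terms M h"
    using insert by (auto simp: diff_op_iff_terms)
  ultimately show ?case
    unfolding diff_op_iff_terms using insert.hyps
    by (intro exI[of _ "L @ M"]) (auto simp: fun_eq_iff eval_terms_append dest: fun_cong)
qed

fun inverse_ops :: "(nat \<Rightarrow> 'n fn \<Rightarrow> 'n fn) \<Rightarrow> nat \<Rightarrow> 'n fn \<Rightarrow> 'n fn" where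
  "inverse_ops \<rho> 0 h = h"
| "inverse_ops \<rho> (Suc r) h = (\<lambda>x. - (\<Sum>s\<le>r. inverse_ops \<rho> s (\<rho> (Suc r - s) h) x))"

lemma apply_ser_inverse_ops:
  "apply_ser (inverse_ops \<rho>) (\<lambda>r. if r = 0 then h else \<rho> r h) = (\<lambda>r x. if r = 0 then h x else 0)"
proof (intro ext)
  fix r x
  show "apply_ser (inverse_ops \<rho>) (\<lambda>r. if r = 0 then h else \<rho> r h) r x
      = (if r = 0 then h x else 0)"
  proof (cases r)
    case (Suc m)
    let ?F = "\<lambda>r. if r = 0 then h else \<rho> r h"
    have "apply_ser (inverse_ops \<rho>) ?F r x
        = (\<Sum>s\<le>m. inverse_ops \<rho> s (?F (Suc m - s)) x) + inverse_ops \<rho> (Suc m) (?F 0) x"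
      by (simp only: apply_ser_def Suc sum.atMost_Suc diff_self_eq_0)
    also have "\<dots> = (\<Sum>s\<le>m. inverse_ops \<rho> s (\<rho> (Suc m - s) h) x) + inverse_ops \<rho> (Suc m) h x"
      by (intro arg_cong2[where f = "(+)"] sum.cong) auto
    also have "\<dots> = 0"
      by (simp only: inverse_ops.simps)
    finally show ?thesis using Suc by simp
  qed (simp add: apply_ser_def)
qed

lemma diff_op_inverse_ops:
  assumes "\<And>r. r \<ge> 1 \<Longrightarrow> diff_op (\<rho> r)"
  shows "diff_op (inverse_ops \<rho> r)"
proof (induction r rule: less_induct)
  case (less r)
  show ?case
  proof (cases r)
    case 0
    then have "inverse_ops \<rho> r = (\<lambda>h. h)" by (simp add: fun_eq_iff)
    then show ?thesis using diff_op_id by simp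
  next
    case (Suc m)
    have "diff_op (\<lambda>h. inverse_ops \<rho> s (\<rho> (Suc m - s) h))" if "s \<le> m" for s
    proof (rule diff_op_comp[of "inverse_ops \<rho> s" "\<rho> (Suc m - s)"])
      show "diff_op (inverse_ops \<rho> s)" using that Suc less by simp
      show "diff_op (\<rho> (Suc m - s))" using that assms by simp
    qed
    then have "diff_op (\<lambda>h x. - (\<Sum>s\<le>m. inverse_ops \<rho> s (\<rho> (Suc m - s) h) x))"
      by (intro diff_op_uminus diff_op_sum) auto
    moreover have "inverse_ops \<rho> r = (\<lambda>h x. - (\<Sum>s\<le>m. inverse_ops \<rho> s (\<rho> (Suc m - s) h) x))"
      using Suc by (intro ext) simp
    ultimately show ?thesis by simp
  qed
qed

theorem corollary4:
  fixes P :: "('n::finite) fn \<Rightarrow> 'n fn \<Rightarrow> 'n fn"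
    and C :: "nat \<Rightarrow> 'n fn \<Rightarrow> 'n fn \<Rightarrow> 'n fn"
    and \<rho> :: "nat \<Rightarrow> 'n fn \<Rightarrow> 'n fn"
  assumes "poisson_bracket P"
    and "star_product P C"
    and "sun_cochains C \<rho>"
  shows "\<exists>S :: nat \<Rightarrow> 'n fn \<Rightarrow> 'n fn.
           (\<forall>f. smooth f \<longrightarrow> S 0 f = f) \<and>
           (\<forall>r\<ge>1. diff_op (S r)) \<and>
           (\<forall>f g. smooth f \<longrightarrow> smooth g \<longrightarrow>
              apply_ser S (sun \<rho> f g) = (\<lambda>r x. if r = 0 then f x * g x else 0))"
proof (intro exI[of _ "inverse_ops \<rho>"] conjI allI impI)
  fix r :: nat and f g :: "'n fn"
  show "inverse_ops \<rho> 0 f = f" by simp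
  show "diff_op (inverse_ops \<rho> r)"
    using assms(3) by (intro diff_op_inverse_ops) (simp add: sun_cochains_def)
  show "apply_ser (inverse_ops \<rho>) (sun \<rho> f g) = (\<lambda>r x. if r = 0 then f x * g x else 0)"
    unfolding sun_def by (rule apply_ser_inverse_ops)
qed

end
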